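(* Let $n\ge1$, $D\ge1$, and let $X_n=\{\mathbf{x}^0,\ldots,\mathbf{x}^{n-1}\}\subseteq\{0,1\}^D$ consist of $n$ pairwise distinct vectors, indexed so that $\mathbf{a}\cdot\mathbf{x}^0<\mathbf{a}\cdot\mathbf{x}^1<\cdots<\mathbf{a}\cdot\mathbf{x}^{n-1}$ for some $\mathbf{a}\in\mathbb{Z}^D$. Let $r=\lceil\sqrt n\rceil$. Then there is a three-layer Boolean threshold network with $D$ input nodes, $r+D$ hidden nodes and $2r$ output nodes that maps each $\mathbf{x}^i$ to the concatenation $(\mathbf{h}^k[r],\mathbf{h}^\ell[r])\in\{0,1\}^{2r}$, where $k,\ell$ are the integers with $i=kr+\ell$ and $0\le\ell<r$.
   Context: For integers $0\le i<s$, the step vector $\mathbf{h}^i[s]\in\{0,1\}^s$ has $\mathbf{h}^i[s]_j=1$ for $0\le j\le i$ and $0$ for $i<j<s$. A Boolean threshold function is a map $\{0,1\}^h\to\{0,1\}$, $\mathbf{u}\mapsto[\mathbf{w}\cdot\mathbf{u}\ge\theta]$ (value $1$ iff $\mathbf{w}\cdot\mathbf{u}\ge\theta$) with $\mathbf{w}\in\mathbb{Z}^h,\theta\in\mathbb{Z}$. An $L$-layer Boolean threshold network has layers $1,\ldots,L$; layer $1$ is the input; each node of layer $t+1$ computes a Boolean threshold function of the values of layer $t$; the network computes the map input $\mapsto$ values of layer $L$; layers $2,\ldots,L-1$ are hidden. *)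

theory Defs
  imports Complex_Main
begin

text \<open>Boolean vectors in {0,1}^h are represented as functions nat => bool,
  of which only the entries with index < h are relevant.\<close>

definition dotb :: "nat \<Rightarrow> (nat \<Rightarrow> int) \<Rightarrow> (nat \<Rightarrow> bool) \<Rightarrow> int" where
  "dotb h w u = (\<Sum>j<h. w j * of_bool (u j))"

definition thr :: "nat \<Rightarrow> (nat \<Rightarrow> int) \<Rightarrow> int \<Rightarrow> (nat \<Rightarrow> bool) \<Rightarrow> bool" where
  "thr h w \<theta> u = (dotb h w u \<ge> \<theta>)"

definition layer :: "nat \<Rightarrow> (nat \<Rightarrow> nat \<Rightarrow> int) \<Rightarrow> (nat \<Rightarrow> int) \<Rightarrow> (nat \<Rightarrow> bool) \<Rightarrow> nat \<Rightarrow> bool" where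
  "layer h W t u = (\<lambda>i. thr h (W i) (t i) u)"

text \<open>Three-layer network: din input nodes, m hidden nodes (layer 2), output layer 3
  (outputs read at the indices below the number of output nodes).\<close>
definition net3 :: "nat \<Rightarrow> nat \<Rightarrow> (nat \<Rightarrow> nat \<Rightarrow> int) \<Rightarrow> (nat \<Rightarrow> int)
    \<Rightarrow> (nat \<Rightarrow> nat \<Rightarrow> int) \<Rightarrow> (nat \<Rightarrow> int) \<Rightarrow> (nat \<Rightarrow> bool) \<Rightarrow> nat \<Rightarrow> bool" where
  "net3 din m W1 t1 W2 t2 x = layer m W2 t2 (layer din W1 t1 x)"

text \<open>Step vector h^i[s]: entry j is 1 iff j <= i (for 0 <= j < s).\<close>
definition step_vec :: "nat \<Rightarrow> nat \<Rightarrow> nat \<Rightarrow> bool" where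
  "step_vec s i j = (j \<le> i \<and> j < s)"

definition concat_vec :: "nat \<Rightarrow> (nat \<Rightarrow> bool) \<Rightarrow> (nat \<Rightarrow> bool) \<Rightarrow> nat \<Rightarrow> bool" where
  "concat_vec r u v j = (if j < r then u j else v (j - r))"

end

theory Submission
  imports Defs
begin

(* Write i = k r + l.  Since the values a . x^i are strictly increasing, the hidden node m < r
   with threshold a . x^(m r) fires iff m r <= i, i.e. iff m <= k: the first r hidden nodes
   compute h^k[r], and the remaining D hidden nodes copy the input.  The first r output nodes
   copy h^k[r].  Output node r + l must decide k r + l <= i, i.e. a . x^(k r + l) <= a . x^i;
   the threshold a . x^(k r + l) depends on k, but with telescoping weights the hidden step
   vector h^k[r] contributes exactly - a . x^(k r + l), so a fixed threshold 0 suffices. *)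

lemma dotb_cong:
  assumes "\<And>q. q < h \<Longrightarrow> u q = u' q"
  shows "dotb h w u = dotb h w u'"
  unfolding dotb_def using assms by (intro sum.cong) auto

lemma layer_cong:
  assumes "\<And>q. q < h \<Longrightarrow> u q = u' q"
  shows "layer h W t u = layer h W t u'"
  unfolding layer_def thr_def using dotb_cong[OF assms] by simp

lemma dotb_indicator:
  assumes "m < h"
  shows "dotb h (\<lambda>q. of_bool (q = m)) u = of_bool (u m)"
proof -
  have "(\<lambda>q. of_bool (q = m) * of_bool (u q)) = (\<lambda>q. if q = m then of_bool (u m) else (0::int))"
    by auto
  then show ?thesis unfolding dotb_def using assms by (simp add: sum.delta)
qed

lemma thr_indicator:
  assumes "m < h"
  shows "thr h (\<lambda>q. of_bool (q = m)) 1 u = u m"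
  unfolding thr_def using dotb_indicator[OF assms] by simp

lemma dotb_concat_vec:
  "dotb (r + D) w (concat_vec r u v) = dotb r w u + dotb D (\<lambda>d. w (r + d)) v"
proof (induction D)
  case 0
  show ?case by (auto simp: dotb_def concat_vec_def intro!: sum.cong)
next
  case (Suc D)
  then show ?case unfolding dotb_def concat_vec_def by simp
qed

definition telescoping_weights :: "(nat \<Rightarrow> int) \<Rightarrow> nat \<Rightarrow> int" where
  "telescoping_weights T q = (if q = 0 then - T 0 else T (q - 1) - T q)"

lemma sum_telescoping_weights: "(\<Sum>q\<le>k. telescoping_weights T q) = - T k"
  by (induction k) (auto simp: telescoping_weights_def)

lemma dotb_telescoping_weights_step_vec:
  assumes "k < r"
  shows "dotb r (telescoping_weights T) (step_vec r k) = - T k"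
proof -
  have "dotb r (telescoping_weights T) (step_vec r k)
      = (\<Sum>q\<in>{..<r} \<inter> {..k}. telescoping_weights T q)"
    unfolding dotb_def step_vec_def by (simp add: sum.inter_restrict)
  also have "{..<r} \<inter> {..k} = {..k}" using assms by auto
  finally show ?thesis by (simp add: sum_telescoping_weights)
qed

lemma obtain_rank_thresholds:
  fixes v :: "nat \<Rightarrow> int"
  assumes "strict_mono_on {..<n} v"
  obtains V where "\<And>i p. i < n \<Longrightarrow> V p \<le> v i \<longleftrightarrow> p \<le> i"
proof
  fix i p assume "i < n"
  show "(if p < n then v p else v (n - 1) + 1) \<le> v i \<longleftrightarrow> p \<le> i"
  proof (cases "p < n")
    case True
    then show ?thesis using strict_mono_on_less[OF assms, of i p] \<open>i < n\<close> by auto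
  next
    case False
    have "v i \<le> v (n - 1)"
      using strict_mono_on_leD[OF assms, of i "n - 1"] \<open>i < n\<close> by auto
    then show ?thesis using False \<open>i < n\<close> by auto
  qed
qed

definition hidden_weights :: "(nat \<Rightarrow> int) \<Rightarrow> nat \<Rightarrow> nat \<Rightarrow> nat \<Rightarrow> int" where
  "hidden_weights a r m = (if m < r then a else (\<lambda>d. of_bool (d = m - r)))"

definition hidden_thresholds :: "(nat \<Rightarrow> int) \<Rightarrow> nat \<Rightarrow> nat \<Rightarrow> int" where
  "hidden_thresholds V r m = (if m < r then V (m * r) else 1)"

definition output_weights :: "(nat \<Rightarrow> int) \<Rightarrow> (nat \<Rightarrow> int) \<Rightarrow> nat \<Rightarrow> nat \<Rightarrow> nat \<Rightarrow> int" where
  "output_weights a V r j =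
     (if j < r then (\<lambda>q. of_bool (q = j))
      else (\<lambda>q. if q < r then telescoping_weights (\<lambda>k. V (k * r + (j - r))) q else a (q - r)))"

definition output_thresholds :: "nat \<Rightarrow> nat \<Rightarrow> int" where
  "output_thresholds r j = (if j < r then 1 else 0)"

lemma hidden_layer:
  assumes "r > 0" and rank: "\<And>p. V p \<le> dotb D a u \<longleftrightarrow> p \<le> i" and "m < r + D"
  shows "layer D (hidden_weights a r) (hidden_thresholds V r) u m
    = concat_vec r (step_vec r (i div r)) u m"
proof (cases "m < r")
  case True
  have "layer D (hidden_weights a r) (hidden_thresholds V r) u m = (m * r \<le> i)"
    using True rank unfolding layer_def thr_def hidden_weights_def hidden_thresholds_def by simp
  also have "\<dots> = (m \<le> i div r)"
    using \<open>r > 0\<close> by (simp add: less_eq_div_iff_mult_less_eq)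
  finally show ?thesis using True unfolding concat_vec_def step_vec_def by simp
next
  case False
  then show ?thesis
    using thr_indicator[of "m - r" D u] \<open>m < r + D\<close>
    unfolding layer_def hidden_weights_def hidden_thresholds_def concat_vec_def by simp
qed

lemma output_layer:
  assumes "k < r" and "j < 2 * r"
  shows "layer (r + D) (output_weights a V r) (output_thresholds r) (concat_vec r (step_vec r k) u) j
    = (if j < r then step_vec r k j else V (k * r + (j - r)) \<le> dotb D a u)"
proof (cases "j < r")
  case True
  then show ?thesis
    using thr_indicator[of j "r + D" "concat_vec r (step_vec r k) u"]
    unfolding layer_def output_weights_def output_thresholds_def concat_vec_def by simp
next
  case False
  have "dotb r (\<lambda>q. output_weights a V r j q) (step_vec r k) = - V (k * r + (j - r))"
    using False dotb_telescoping_weights_step_vec[OF \<open>k < r\<close>]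
    unfolding output_weights_def dotb_def by simp
  moreover have "dotb D (\<lambda>d. output_weights a V r j (r + d)) u = dotb D a u"
    using False unfolding output_weights_def by simp
  ultimately show ?thesis
    using False unfolding layer_def thr_def output_thresholds_def dotb_concat_vec by simp
qed

lemma step_pair_network_exists:
  fixes x :: "nat \<Rightarrow> nat \<Rightarrow> bool" and a :: "nat \<Rightarrow> int"
  assumes "r > 0" and "n \<le> r * r" and increasing: "strict_mono_on {..<n} (\<lambda>i. dotb D a (x i))"
  shows "\<exists>W1 t1 W2 t2. \<forall>i<n. \<forall>j<2*r.
      net3 D (r + D) W1 t1 W2 t2 (x i) j
        = concat_vec r (step_vec r (i div r)) (step_vec r (i mod r)) j"
proof -
  obtain V where rank: "\<And>i p. i < n \<Longrightarrow> V p \<le> dotb D a (x i) \<longleftrightarrow> p \<le> i"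
    using obtain_rank_thresholds[OF increasing] by blast
  have "net3 D (r + D) (hidden_weights a r) (hidden_thresholds V r)
          (output_weights a V r) (output_thresholds r) (x i) j
        = concat_vec r (step_vec r (i div r)) (step_vec r (i mod r)) j"
    if "i < n" and "j < 2 * r" for i j
  proof -
    have "i div r < r" using \<open>i < n\<close> assms(1,2) by (simp add: less_mult_imp_div_less)
    have hidden: "layer (r + D) W t (layer D (hidden_weights a r) (hidden_thresholds V r) (x i))
        = layer (r + D) W t (concat_vec r (step_vec r (i div r)) (x i))" for W t
      by (intro layer_cong hidden_layer[OF \<open>r > 0\<close> rank[OF \<open>i < n\<close>]])
    have "net3 D (r + D) (hidden_weights a r) (hidden_thresholds V r)
          (output_weights a V r) (output_thresholds r) (x i) j
        = (if j < r then step_vec r (i div r) j else (i div r) * r + (j - r) \<le> i)"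
      unfolding net3_def hidden output_layer[OF \<open>i div r < r\<close> \<open>j < 2 * r\<close>]
      using rank[OF \<open>i < n\<close>] by simp
    also have "\<dots> = concat_vec r (step_vec r (i div r)) (step_vec r (i mod r)) j"
    proof -
      have "(i div r) * r + (j - r) \<le> i \<longleftrightarrow> j - r \<le> i mod r"
        by (metis add_le_cancel_left div_mult_mod_eq)
      moreover have "j - r < r" using \<open>j < 2 * r\<close> by simp
      ultimately show ?thesis unfolding concat_vec_def step_vec_def by auto
    qed
    finally show ?thesis .
  qed
  then show ?thesis by blast
qed

lemma le_ceiling_sqrt_squared: "n \<le> nat \<lceil>sqrt (real n)\<rceil> * nat \<lceil>sqrt (real n)\<rceil>"
proof -
  have "real n \<le> (real (nat \<lceil>sqrt (real n)\<rceil>))\<^sup>2"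
    by (intro sqrt_le_D) linarith
  then have "real n \<le> real (nat \<lceil>sqrt (real n)\<rceil> * nat \<lceil>sqrt (real n)\<rceil>)"
    by (simp only: power2_eq_square of_nat_mult)
  then show ?thesis by (simp only: of_nat_le_iff)
qed

theorem theorem12:
  fixes n D :: nat and x :: "nat \<Rightarrow> nat \<Rightarrow> bool" and a :: "nat \<Rightarrow> int"
  assumes "n \<ge> 1" and "D \<ge> 1"
    and "\<forall>i<n. \<forall>j<n. i \<noteq> j \<longrightarrow> (\<exists>d<D. x i d \<noteq> x j d)"
    and "\<forall>i j. i < j \<and> j < n \<longrightarrow> dotb D a (x i) < dotb D a (x j)"
  shows "let r = nat \<lceil>sqrt (real n)\<rceil> in
    \<exists>W1 t1 W2 t2. \<forall>i<n. \<forall>j<2*r.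
      net3 D (r + D) W1 t1 W2 t2 (x i) j
        = concat_vec r (step_vec r (i div r)) (step_vec r (i mod r)) j"
proof -
  define r where "r = nat \<lceil>sqrt (real n)\<rceil>"
  have "n \<le> r * r" unfolding r_def by (rule le_ceiling_sqrt_squared)
  moreover from this have "r > 0" using \<open>n \<ge> 1\<close> by (cases r) auto
  moreover have "strict_mono_on {..<n} (\<lambda>i. dotb D a (x i))"
    using assms(4) by (intro strict_mono_onI) auto
  ultimately show ?thesis
    using step_pair_network_exists unfolding r_def Let_def by blast
qed

end
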